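(* For all integers $n>1$, $$c_{\mathbb{Z}^2}(n)=c_{TS}(n,2)=c_{LS}(n,2)=\lfloor 2n-2\sqrt{n}\rfloor .$$
   Context: A packing of disks in $\mathbb{E}^2$ is a family of disks with pairwise disjoint interiors. A packing is totally separable (a TS-packing) if any two of its disks can be separated by a line disjoint from the interior of every disk of the packing. A packing $\mathcal{P}$ is locally separable (an LS-packing) if each disk of $\mathcal{P}$ together with the disks of $\mathcal{P}$ tangent to it form a TS-packing. The contact number $c(\mathcal{P})$ is the number of unordered pairs of tangent disks of $\mathcal{P}$. $c_{TS}(n,2)$ (resp. $c_{LS}(n,2)$) denotes the largest contact number of a TS-packing (resp. LS-packing) of $n$ congruent disks in $\mathbb{E}^2$. $c_{\mathbb{Z}^2}(n)$ denotes the largest contact number of a packing of $n$ disks of diameter $1$ whose centers are distinct points of the integer lattice $\mathbb{Z}^2$. *)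

theory Defs
  imports "HOL-Analysis.Analysis"
begin

text \<open>A family of congruent disks in the plane is given by a set C of centers
  and a common radius r > 0; the disks are the closed balls cball c r.
  Distinct disks have distinct centers (disjoint interiors forces this).\<close>

type_synonym pt = "real ^ 2"

definition disk_packing :: "pt set \<Rightarrow> real \<Rightarrow> bool" where
  "disk_packing C r \<longleftrightarrow> r > 0 \<and>
     (\<forall>c\<in>C. \<forall>d\<in>C. c \<noteq> d \<longrightarrow> ball c r \<inter> ball d r = {})"

definition tangent :: "real \<Rightarrow> pt \<Rightarrow> pt \<Rightarrow> bool" where
  "tangent r c d \<longleftrightarrow> c \<noteq> d \<and> dist c d = 2 * r"

definition totally_separable :: "pt set \<Rightarrow> real \<Rightarrow> bool" where
  "totally_separable C r \<longleftrightarrow> disk_packing C r \<and>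
     (\<forall>c\<in>C. \<forall>d\<in>C. c \<noteq> d \<longrightarrow>
        (\<exists>a b. a \<noteq> 0 \<and>
           (\<forall>x\<in>cball c r. a \<bullet> x \<le> b) \<and> (\<forall>x\<in>cball d r. a \<bullet> x \<ge> b) \<and>
           (\<forall>e\<in>C. ball e r \<inter> {x. a \<bullet> x = b} = {})))"

definition locally_separable :: "pt set \<Rightarrow> real \<Rightarrow> bool" where
  "locally_separable C r \<longleftrightarrow> disk_packing C r \<and>
     (\<forall>c\<in>C. totally_separable (insert c {d\<in>C. tangent r c d}) r)"

definition contact_number :: "pt set \<Rightarrow> real \<Rightarrow> nat" where
  "contact_number C r = card {{c, d} | c d. c \<in> C \<and> d \<in> C \<and> tangent r c d}"

definition c_TS :: "nat \<Rightarrow> nat" where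
  "c_TS n = Max {contact_number C r | C r. finite C \<and> card C = n \<and> totally_separable C r}"

definition c_LS :: "nat \<Rightarrow> nat" where
  "c_LS n = Max {contact_number C r | C r. finite C \<and> card C = n \<and> locally_separable C r}"

definition c_Z2 :: "nat \<Rightarrow> nat" where
  "c_Z2 n = Max {contact_number C (1/2) | C. finite C \<and> card C = n \<and>
      disk_packing C (1/2) \<and> (\<forall>c\<in>C. c $ 1 \<in> \<int> \<and> c $ 2 \<in> \<int>)}"

end

theory Submission
  imports Defs
begin

(*
  In a locally separable packing, two disks touching a common disk subtend an angle of at
  least 90 degrees at its centre.  Orient each contact from one centre to the other so that
  its direction lies in the quadrant [0, 90) or in the quadrant [90, 180) degrees.  Within one
  quadrant every disk then has at most one outgoing and at most one incoming contact, so the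
  contacts form disjoint chains along which the centres move monotonically, and their number
  is n minus the number s of chain ends.  A disk is determined by the ends of its chains in
  the two quadrants, hence n <= s1 * s2 and the contact number 2n - s1 - s2 is at most
  2n - 2 sqrt n.  Conversely, n lattice points filled row by row into rows of length
  ceil (sqrt n) realise the floor of this bound, and lattice packings are totally separable.
*)

lemma edges_eq_image: "{{v, w} | v w. (v, w) \<in> E} = (\<lambda>(v, w). {v, w}) ` E"
  by auto

locale monotone_chains =
  fixes C :: "'a set" and E :: "('a \<times> 'a) set" and X Y :: "'a \<Rightarrow> real"
  assumes finite_C: "finite C"
    and edges_in_C: "E \<subseteq> C \<times> C"
    and single_valued: "single_valued E"
    and single_valued_converse: "single_valued (E\<inverse>)"
    and edge_mono: "(v, w) \<in> E \<Longrightarrow> X v < X w \<and> Y v \<le> Y w"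
begin

lemma trancl_mono: "(v, w) \<in> E\<^sup>+ \<Longrightarrow> X v < X w \<and> Y v \<le> Y w"
  by (induction rule: trancl_induct) (auto dest: edge_mono)

lemma finite_E: "finite E"
  using finite_subset[OF edges_in_C] finite_C by blast

lemma wf_converse: "wf (E\<inverse>)"
proof (rule finite_acyclic_wf_converse[OF finite_E])
  show "acyclic E"
    unfolding acyclic_def using trancl_mono by fastforce
qed

definition sink :: "'a \<Rightarrow> 'a" where
  "sink v = (THE s. (v, s) \<in> E\<^sup>* \<and> s \<notin> Domain E)"

lemma sink_exists: "\<exists>s. (v, s) \<in> E\<^sup>* \<and> s \<notin> Domain E"
proof (induction v rule: wf_induct_rule[OF wf_converse])
  case (1 v)
  show ?case
  proof (cases "v \<in> Domain E")
    case True
    then obtain w where "(v, w) \<in> E" by blast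
    with 1 obtain s where "(w, s) \<in> E\<^sup>*" "s \<notin> Domain E" by blast
    with \<open>(v, w) \<in> E\<close> show ?thesis by (meson converse_rtrancl_into_rtrancl)
  qed blast
qed

lemma sink_unique:
  assumes "(v, s) \<in> E\<^sup>*" "s \<notin> Domain E" "(v, s') \<in> E\<^sup>*" "s' \<notin> Domain E"
  shows "s = s'"
  using single_valued_confluent[OF single_valued assms(1,3)] assms(2,4)
  by (auto elim: converse_rtranclE)

lemma sink: "(v, sink v) \<in> E\<^sup>*" "sink v \<notin> Domain E"
  using theI'[of "\<lambda>s. (v, s) \<in> E\<^sup>* \<and> s \<notin> Domain E"] sink_exists sink_unique
  unfolding sink_def by blast+

lemma sink_in_C: "v \<in> C \<Longrightarrow> sink v \<in> C"
  using sink(1)[of v] edges_in_C by (auto elim: rtrancl.cases)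

lemma comparable_if_sink_eq:
  assumes "sink v = sink w" "v \<noteq> w"
  shows "(v, w) \<in> E\<^sup>+ \<or> (w, v) \<in> E\<^sup>+"
proof -
  have "(sink v, v) \<in> (E\<inverse>)\<^sup>*" "(sink v, w) \<in> (E\<inverse>)\<^sup>*"
    using sink(1)[of v] sink(1)[of w] assms(1) by (simp_all add: rtrancl_converseI)
  from single_valued_confluent[OF single_valued_converse this] assms(2)
  show ?thesis by (auto simp: rtrancl_converse rtrancl_eq_or_trancl)
qed

lemma finite_edges: "finite {{v, w} | v w. (v, w) \<in> E}"
  unfolding edges_eq_image using finite_E by blast

lemma card_edges_add_card_sinks:
  "card {{v, w} | v w. (v, w) \<in> E} + card (C - Domain E) = card C"
proof -
  have "inj_on (\<lambda>(v, w). {v, w}) E"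
  proof (rule inj_onI, clarify)
    fix v w v' w' assume "(v, w) \<in> E" "(v', w') \<in> E" "{v, w} = {v', w'}"
    then show "v = v' \<and> w = w'"
      using edge_mono[of v w] edge_mono[of v' w'] by (auto simp: doubleton_eq_iff)
  qed
  then have "card {{v, w} | v w. (v, w) \<in> E} = card E"
    unfolding edges_eq_image by (rule card_image)
  also have "\<dots> = card (Domain E)"
  proof -
    have "inj_on fst E"
      using single_valued by (auto simp: inj_on_def single_valued_def)
    then show ?thesis by (simp add: card_image fst_eq_Domain[symmetric])
  qed
  moreover have "Domain E \<subseteq> C" using edges_in_C by blast
  then have "card (C - Domain E) = card C - card (Domain E)" "card (Domain E) \<le> card C"
    using finite_C by (simp_all add: card_Diff_subset finite_subset card_mono)
  ultimately show ?thesis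
    by linarith
qed

end

lemma card_le_mult_card_sinks:
  assumes "monotone_chains C EA X Y" and "monotone_chains C EB Y (\<lambda>v. - X v)"
  shows "card C \<le> card (C - Domain EA) * card (C - Domain EB)"
proof -
  interpret A: monotone_chains C EA X Y by fact
  interpret B: monotone_chains C EB Y "\<lambda>v. - X v" by fact
  have "inj_on (\<lambda>v. (A.sink v, B.sink v)) C"
  proof (rule inj_onI, rule ccontr)
    fix v w assume "(A.sink v, B.sink v) = (A.sink w, B.sink w)" "v \<noteq> w"
    then have "(v, w) \<in> EA\<^sup>+ \<or> (w, v) \<in> EA\<^sup>+" "(v, w) \<in> EB\<^sup>+ \<or> (w, v) \<in> EB\<^sup>+"
      using A.comparable_if_sink_eq B.comparable_if_sink_eq by auto
    then show False
      using A.trancl_mono[of v w] A.trancl_mono[of w v] B.trancl_mono[of v w] B.trancl_mono[of w v]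
      by auto
  qed
  moreover have "(\<lambda>v. (A.sink v, B.sink v)) ` C \<subseteq> (C - Domain EA) \<times> (C - Domain EB)"
    using A.sink(2) A.sink_in_C B.sink(2) B.sink_in_C by (simp add: image_subset_iff)
  ultimately have "card C \<le> card ((C - Domain EA) \<times> (C - Domain EB))"
    using A.finite_C by (intro card_inj_on_le) auto
  then show ?thesis by (simp add: card_cartesian_product)
qed

lemma inner_real2: "(x::pt) \<bullet> y = x$1 * y$1 + x$2 * y$2"
  by (simp add: inner_vec_def sum_2)

lemma tangent_commute: "tangent r c d \<longleftrightarrow> tangent r d c"
  by (auto simp: tangent_def dist_commute)

definition nonacute_contacts :: "pt set \<Rightarrow> real \<Rightarrow> bool" where
  "nonacute_contacts C r \<longleftrightarrow> (\<forall>c\<in>C. \<forall>d\<in>C. \<forall>d'\<in>C.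
     tangent r c d \<longrightarrow> tangent r c d' \<longrightarrow> d \<noteq> d' \<longrightarrow> (d - c) \<bullet> (d' - c) \<le> 0)"

definition contact_edges :: "pt set \<Rightarrow> real \<Rightarrow> (pt \<Rightarrow> bool) \<Rightarrow> (pt \<times> pt) set" where
  "contact_edges C r P = {(v, w). v \<in> C \<and> w \<in> C \<and> tangent r v w \<and> P (w - v)}"

lemma monotone_chains_contact_edges:
  assumes "finite C" and nonacute: "nonacute_contacts C r"
    and acute: "\<And>u u'. P u \<Longrightarrow> P u' \<Longrightarrow> 0 < u \<bullet> u'"
    and mono: "\<And>v w. P (w - v) \<Longrightarrow> X v < X w \<and> Y v \<le> Y w"
  shows "monotone_chains C (contact_edges C r P) X Y"
proof
  show "single_valued (contact_edges C r P)"
  proof (rule single_valuedI, rule ccontr)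
    fix v w w' assume "(v, w) \<in> contact_edges C r P" "(v, w') \<in> contact_edges C r P" "w \<noteq> w'"
    then show False
      using nonacute acute[of "w - v" "w' - v"]
      unfolding contact_edges_def nonacute_contacts_def by fastforce
  qed
  show "single_valued ((contact_edges C r P)\<inverse>)"
  proof (rule single_valuedI, rule ccontr)
    fix w v v' assume "(w, v) \<in> (contact_edges C r P)\<inverse>" "(w, v') \<in> (contact_edges C r P)\<inverse>" "v \<noteq> v'"
    then have "(v - w) \<bullet> (v' - w) \<le> 0" "0 < (w - v) \<bullet> (w - v')"
      using nonacute acute[of "w - v" "w - v'"] tangent_commute
      unfolding contact_edges_def nonacute_contacts_def by auto
    moreover have "(v - w) \<bullet> (v' - w) = (w - v) \<bullet> (w - v')"
      by (metis inner_minus_left inner_minus_right minus_diff_eq)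
    ultimately show False by simp
  qed
qed (use assms in \<open>auto simp: contact_edges_def\<close>)

lemma two_sqrt_le_add_if_le_mult:
  "n \<le> a * b \<Longrightarrow> 2 * sqrt (real n) \<le> real a + real b"
proof -
  assume "n \<le> a * b"
  then have "sqrt (real n) \<le> sqrt (real a * real b)"
    by (simp add: of_nat_mult[symmetric] del: of_nat_mult)
  also have "\<dots> \<le> (real a + real b) / 2"
    using arith_geo_mean_sqrt[of "real a" "real b"] by simp
  finally show ?thesis by simp
qed

lemma contact_number_le_if_nonacute:
  assumes "finite C" and "nonacute_contacts C r"
  shows "real (contact_number C r) \<le> 2 * real (card C) - 2 * sqrt (real (card C))"
proof -
  define EA where "EA = contact_edges C r (\<lambda>u. u$1 > 0 \<and> u$2 \<ge> 0)"
  define EB where "EB = contact_edges C r (\<lambda>u. u$2 > 0 \<and> u$1 \<le> 0)"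
  have A: "monotone_chains C EA (\<lambda>v. v$1) (\<lambda>v. v$2)"
    unfolding EA_def using assms
    by (rule monotone_chains_contact_edges) (auto simp: inner_real2 add_pos_nonneg)
  have B: "monotone_chains C EB (\<lambda>v. v$2) (\<lambda>v. - v$1)"
    unfolding EB_def using assms
    by (rule monotone_chains_contact_edges) (auto simp: inner_real2 add_nonneg_pos mult_nonpos_nonpos)
  let ?edges = "\<lambda>E. {{v, w} | v w. (v, w) \<in> E}"
  have "{{c, d} | c d. c \<in> C \<and> d \<in> C \<and> tangent r c d} = ?edges EA \<union> ?edges EB"
  proof (intro equalityI subsetI)
    fix e assume "e \<in> {{c, d} | c d. c \<in> C \<and> d \<in> C \<and> tangent r c d}"
    then obtain c d where "e = {c, d}" "c \<in> C" "d \<in> C" "tangent r c d"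
      by blast
    moreover from this have "e = {d, c}" "tangent r d c" "c \<noteq> d"
      using tangent_commute by (auto simp: tangent_def)
    moreover from \<open>c \<noteq> d\<close> have "(d - c)$1 \<noteq> 0 \<or> (d - c)$2 \<noteq> 0"
      by (auto simp: vec_eq_iff forall_2)
    ultimately have "(c, d) \<in> EA \<or> (d, c) \<in> EA \<or> (c, d) \<in> EB \<or> (d, c) \<in> EB"
      unfolding EA_def EB_def contact_edges_def by auto
    with \<open>e = {c, d}\<close> \<open>e = {d, c}\<close> show "e \<in> ?edges EA \<union> ?edges EB"
      by blast
  qed (auto simp: EA_def EB_def contact_edges_def)
  moreover have "?edges EA \<inter> ?edges EB = {}"
    by (auto simp: EA_def EB_def contact_edges_def doubleton_eq_iff)
  moreover have "finite (?edges EA)" "finite (?edges EB)"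
    using monotone_chains.finite_edges[OF A] monotone_chains.finite_edges[OF B] by simp_all
  ultimately have "contact_number C r = card (?edges EA) + card (?edges EB)"
    unfolding contact_number_def by (simp add: card_Un_disjoint)
  moreover have "2 * sqrt (real (card C)) \<le> real (card (C - Domain EA)) + real (card (C - Domain EB))"
    using card_le_mult_card_sinks[OF A] B by (intro two_sqrt_le_add_if_le_mult) simp
  ultimately show ?thesis
    using monotone_chains.card_edges_add_card_sinks[OF A] monotone_chains.card_edges_add_card_sinks[OF B]
    by linarith
qed

lemma dist_ge_if_balls_disjoint:
  fixes c d :: "'a::real_normed_vector"
  assumes "ball c r \<inter> ball d r = {}"
  shows "2 * r \<le> dist c d"
proof (rule ccontr)
  assume "\<not> 2 * r \<le> dist c d"
  then have "midpoint c d \<in> ball c r \<inter> ball d r"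
    by (simp add: dist_midpoint)
  with assms show False by blast
qed

lemma separating_line_of_tangent_balls:
  fixes c d a :: "'a::real_inner"
  assumes "0 < r" "dist c d = 2 * r" "a \<noteq> 0"
    and below: "\<forall>x\<in>cball c r. a \<bullet> x \<le> b" and above: "\<forall>x\<in>cball d r. b \<le> a \<bullet> x"
  shows "\<exists>k>0. a = k *\<^sub>R (d - c)" and "b = a \<bullet> midpoint c d"
proof -
  have "midpoint c d \<in> cball c r" "midpoint c d \<in> cball d r"
    using assms(2) by (simp_all add: dist_midpoint)
  with below above show b: "b = a \<bullet> midpoint c d"
    by (meson order_antisym)
  let ?u = "d - c"
  have norm_u: "norm ?u = 2 * r"
    using assms(2) by (simp add: dist_norm norm_minus_commute)
  have "c + (r / norm a) *\<^sub>R a \<in> cball c r"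
    using assms(1,3) by (simp add: dist_norm)
  then have "a \<bullet> (c + (r / norm a) *\<^sub>R a) \<le> a \<bullet> midpoint c d"
    using below b by blast
  moreover have "a \<bullet> (c + (r / norm a) *\<^sub>R a) = a \<bullet> c + r * norm a"
    using assms(3) by (simp add: inner_add_right dot_square_norm power2_eq_square)
  moreover have "a \<bullet> midpoint c d = a \<bullet> c + (a \<bullet> ?u) / 2"
    by (simp add: midpoint_def inner_add_right inner_diff_right field_simps)
  ultimately have "a \<bullet> c + r * norm a \<le> a \<bullet> c + (a \<bullet> ?u) / 2"
    by simp
  then have "norm a * norm ?u \<le> a \<bullet> ?u"
    using norm_u by (simp add: algebra_simps)
  then have "a \<bullet> ?u = norm a * norm ?u"
    using norm_cauchy_schwarz[of a ?u] by simp
  then have "norm a *\<^sub>R ?u = norm ?u *\<^sub>R a"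
    by (simp add: norm_cauchy_schwarz_eq)
  then have "(norm a / (2 * r)) *\<^sub>R ?u = (1 / (2 * r)) *\<^sub>R ((2 * r) *\<^sub>R a)"
    using norm_u by (metis scaleR_scaleR times_divide_eq_left mult_1)
  then have "a = (norm a / (2 * r)) *\<^sub>R ?u"
    using assms(1) by simp
  moreover have "0 < norm a / (2 * r)"
    using assms(1,3) by simp
  ultimately show "\<exists>k>0. a = k *\<^sub>R ?u" by blast
qed

lemma perpendicular_bisector_meets_ball:
  fixes c d d' :: "'a::real_inner"
  assumes "0 < r" "dist c d = 2 * r" "dist c d' = 2 * r" "2 * r \<le> dist d d'"
    and acute: "0 < (d - c) \<bullet> (d' - c)"
  shows "\<exists>q\<in>ball d' r. (d - c) \<bullet> q = (d - c) \<bullet> midpoint c d"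
proof -
  define u where "u = d - c"
  define w where "w = d' - c"
  have uu: "u \<bullet> u = 4 * r\<^sup>2" and ww: "w \<bullet> w = 4 * r\<^sup>2"
    using assms(2,3) by (simp_all add: u_def w_def dist_norm norm_minus_commute dot_square_norm power_mult_distrib)
  have "(2 * r)\<^sup>2 \<le> (norm (u - w))\<^sup>2"
    using assms(1,4) by (intro power_mono) (simp_all add: u_def w_def dist_norm norm_minus_commute)
  then have uw: "u \<bullet> w \<le> 2 * r\<^sup>2"
    using uu ww by (simp add: dot_square_norm[symmetric] inner_diff_left inner_diff_right inner_commute power_mult_distrib)
  txt \<open>d' + s u is the orthogonal projection of d' onto the bisector.\<close>
  define s where "s = (2 * r\<^sup>2 - u \<bullet> w) / (4 * r\<^sup>2)"
  have "0 \<le> s" "s < 1 / 2"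
    using uw acute assms(1) by (simp_all add: s_def u_def w_def field_simps)
  moreover have "norm u = 2 * r"
    using assms(2) by (simp add: u_def dist_norm norm_minus_commute)
  ultimately have "d' + s *\<^sub>R u \<in> ball d' r"
    using assms(1) by (simp add: dist_norm)
  moreover have "u \<bullet> (d' + s *\<^sub>R u) = u \<bullet> midpoint c d"
    using uu assms(1)
    by (simp add: s_def u_def w_def midpoint_def inner_add_right inner_diff_right field_simps)
  ultimately show ?thesis unfolding u_def by blast
qed

definition separable_by_line :: "pt set \<Rightarrow> real \<Rightarrow> pt \<Rightarrow> pt \<Rightarrow> bool" where
  "separable_by_line C r c d \<longleftrightarrow> (\<exists>a b. a \<noteq> 0 \<and>
     (\<forall>x\<in>cball c r. a \<bullet> x \<le> b) \<and> (\<forall>x\<in>cball d r. a \<bullet> x \<ge> b) \<and>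
     (\<forall>e\<in>C. ball e r \<inter> {x. a \<bullet> x = b} = {}))"

lemma totally_separable_iff:
  "totally_separable C r \<longleftrightarrow>
     disk_packing C r \<and> (\<forall>c\<in>C. \<forall>d\<in>C. c \<noteq> d \<longrightarrow> separable_by_line C r c d)"
  unfolding totally_separable_def separable_by_line_def ..

lemma separable_by_line_commute:
  assumes "separable_by_line C r c d"
  shows "separable_by_line C r d c"
proof -
  obtain a b where "a \<noteq> 0" "\<forall>x\<in>cball c r. a \<bullet> x \<le> b" "\<forall>x\<in>cball d r. a \<bullet> x \<ge> b"
    "\<forall>e\<in>C. ball e r \<inter> {x. a \<bullet> x = b} = {}"
    using assms unfolding separable_by_line_def by blast
  then show ?thesis
    unfolding separable_by_line_def by (intro exI[of _ "- a"] exI[of _ "- b"]) auto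
qed

lemma separable_by_line_subset:
  "separable_by_line C r c d \<Longrightarrow> D \<subseteq> C \<Longrightarrow> separable_by_line D r c d"
  unfolding separable_by_line_def by blast

lemma disk_packing_subset: "disk_packing C r \<Longrightarrow> D \<subseteq> C \<Longrightarrow> disk_packing D r"
  unfolding disk_packing_def by blast

lemma totally_separable_subset:
  "totally_separable C r \<Longrightarrow> D \<subseteq> C \<Longrightarrow> totally_separable D r"
  unfolding totally_separable_iff by (blast intro: disk_packing_subset separable_by_line_subset)

lemma totally_separable_imp_locally_separable:
  assumes "totally_separable C r"
  shows "locally_separable C r"
  unfolding locally_separable_def
proof
  show "disk_packing C r"
    using assms by (simp add: totally_separable_def)
  show "\<forall>c\<in>C. totally_separable (insert c {d \<in> C. tangent r c d}) r"
    by (rule ballI, rule totally_separable_subset[OF assms]) blast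
qed

lemma locally_separable_imp_nonacute_contacts:
  assumes "locally_separable C r"
  shows "nonacute_contacts C r"
  unfolding nonacute_contacts_def
proof (intro ballI impI)
  fix c d d' assume "c \<in> C" "d \<in> C" "d' \<in> C" "tangent r c d" "tangent r c d'" "d \<noteq> d'"
  then have "c \<noteq> d" and dist: "dist c d = 2 * r" "dist c d' = 2 * r"
    by (simp_all add: tangent_def)
  have "disk_packing C r" and "0 < r"
    using assms by (simp_all add: locally_separable_def disk_packing_def)
  then have "2 * r \<le> dist d d'"
    using \<open>d \<in> C\<close> \<open>d' \<in> C\<close> \<open>d \<noteq> d'\<close> by (simp add: disk_packing_def dist_ge_if_balls_disjoint)
  have "totally_separable (insert c {e\<in>C. tangent r c e}) r"
    using assms \<open>c \<in> C\<close> unfolding locally_separable_def by blast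
  then have "separable_by_line (insert c {e\<in>C. tangent r c e}) r c d"
    using \<open>d \<in> C\<close> \<open>tangent r c d\<close> \<open>c \<noteq> d\<close> unfolding totally_separable_iff by blast
  then obtain a b where separates: "a \<noteq> 0" "\<forall>x\<in>cball c r. a \<bullet> x \<le> b" "\<forall>x\<in>cball d r. a \<bullet> x \<ge> b"
    and misses: "ball d' r \<inter> {x. a \<bullet> x = b} = {}"
    using \<open>d' \<in> C\<close> \<open>tangent r c d'\<close> unfolding separable_by_line_def by blast
  txt \<open>The line separating the tangent disks at c and d is their common tangent, the
    perpendicular bisector of cd; if the angle at c were acute it would cut the disk at d'.\<close>
  obtain k where a: "a = k *\<^sub>R (d - c)" and b: "b = a \<bullet> midpoint c d"
    using separating_line_of_tangent_balls[OF \<open>0 < r\<close> dist(1) separates] by blast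
  show "(d - c) \<bullet> (d' - c) \<le> 0"
  proof (rule ccontr)
    assume "\<not> (d - c) \<bullet> (d' - c) \<le> 0"
    then obtain q where q: "q \<in> ball d' r" "(d - c) \<bullet> q = (d - c) \<bullet> midpoint c d"
      using perpendicular_bisector_meets_ball[OF \<open>0 < r\<close> dist \<open>2 * r \<le> dist d d'\<close>] by auto
    then have "a \<bullet> q = b"
      unfolding a b by simp
    with q(1) misses show False by blast
  qed
qed

lemma component_dist_le:
  fixes x y :: "real ^ 'n"
  shows "\<bar>x $ i - y $ i\<bar> \<le> dist x y"
  using component_le_norm_cart[of "x - y" i] by (simp add: dist_norm)

lemma half_integer_line_disjoint_ball:
  fixes e :: "real ^ 'n"
  assumes "e $ i \<in> \<int>" "t \<in> \<int>"
  shows "ball e (1/2) \<inter> {x. x $ i = t + 1/2} = {}"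
proof (rule ccontr)
  assume "ball e (1/2) \<inter> {x. x $ i = t + 1/2} \<noteq> {}"
  then obtain x where "dist e x < 1/2" "x $ i = t + 1/2" by auto
  then have "0 < e $ i - t" "e $ i - t < 1"
    using component_dist_le[of e i x] by linarith+
  moreover have "e $ i - t \<in> \<int>" using assms by simp
  ultimately show False using Ints_nonzero_abs_less1 by fastforce
qed

lemma lattice_separable_by_line:
  fixes C :: "pt set"
  assumes lattice: "\<forall>e\<in>C. \<forall>i. e $ i \<in> \<int>" and "c \<in> C" "d \<in> C" "c $ i < d $ i"
  shows "separable_by_line C (1/2) c d"
  unfolding separable_by_line_def
proof (intro exI conjI)
  let ?a = "axis i 1 :: pt"
  have a: "?a \<bullet> x = x $ i" for x by (simp add: inner_axis')
  have near: "\<bar>x $ i - e $ i\<bar> \<le> 1/2" if "x \<in> cball e (1/2)" for x e :: pt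
    using that component_dist_le[of e i x] by (simp add: abs_minus_commute)
  show "\<forall>x\<in>cball c (1/2). ?a \<bullet> x \<le> c $ i + 1/2"
  proof
    fix x assume "x \<in> cball c (1/2)"
    then show "?a \<bullet> x \<le> c $ i + 1/2"
      using near[of x c] unfolding a by linarith
  qed
  have "1 \<le> d $ i - c $ i"
    using lattice \<open>c \<in> C\<close> \<open>d \<in> C\<close> \<open>c $ i < d $ i\<close> Ints_nonzero_abs_ge1[of "d $ i - c $ i"] by simp
  show "\<forall>x\<in>cball d (1/2). ?a \<bullet> x \<ge> c $ i + 1/2"
  proof
    fix x assume "x \<in> cball d (1/2)"
    then show "?a \<bullet> x \<ge> c $ i + 1/2"
      using near[of x d] \<open>1 \<le> d $ i - c $ i\<close> unfolding a by linarith
  qed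
  show "\<forall>e\<in>C. ball e (1/2) \<inter> {x. ?a \<bullet> x = c $ i + 1/2} = {}"
    using lattice \<open>c \<in> C\<close> half_integer_line_disjoint_ball unfolding a by blast
qed simp

lemma lattice_totally_separable:
  fixes C :: "pt set"
  assumes "\<forall>c\<in>C. c $ 1 \<in> \<int> \<and> c $ 2 \<in> \<int>"
  shows "totally_separable C (1/2)"
  unfolding totally_separable_iff disk_packing_def
proof (intro conjI ballI impI)
  have lattice: "\<forall>e\<in>C. \<forall>i. e $ i \<in> \<int>"
    using assms by (metis (full_types) exhaust_2)
  fix c d assume "c \<in> C" "d \<in> C" "c \<noteq> d"
  then obtain i where "c $ i \<noteq> d $ i" by (auto simp: vec_eq_iff)
  then have "1 \<le> dist c d"
    using lattice \<open>c \<in> C\<close> \<open>d \<in> C\<close> Ints_nonzero_abs_ge1[of "c $ i - d $ i"] component_dist_le[of c i d]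
    by simp
  then show "ball c (1/2) \<inter> ball d (1/2) = {}" by (simp add: disjoint_ballI)
  from \<open>c $ i \<noteq> d $ i\<close> show "separable_by_line C (1/2) c d"
    using lattice_separable_by_line[OF lattice \<open>c \<in> C\<close> \<open>d \<in> C\<close>]
      lattice_separable_by_line[OF lattice \<open>d \<in> C\<close> \<open>c \<in> C\<close>] separable_by_line_commute
    by (metis linorder_neq_iff)
qed simp

lemma dist_real2: "dist (x::pt) y = sqrt ((x$1 - y$1)\<^sup>2 + (x$2 - y$2)\<^sup>2)"
  by (simp add: dist_norm norm_eq_sqrt_inner inner_real2 power2_eq_square)

definition grid_point :: "nat \<Rightarrow> nat \<Rightarrow> pt" where
  "grid_point m k = vector [real (k mod m), real (k div m)]"

lemma grid_point_component [simp]: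
  "grid_point m k $ 1 = real (k mod m)" "grid_point m k $ 2 = real (k div m)"
  by (simp_all add: grid_point_def)

lemma inj_grid_point: "inj (grid_point m)"
proof (rule injI)
  fix k l assume "grid_point m k = grid_point m l"
  then have "grid_point m k $ 1 = grid_point m l $ 1" "grid_point m k $ 2 = grid_point m l $ 2"
    by simp_all
  then have "k mod m = l mod m" "k div m = l div m"
    by simp_all
  then show "k = l" by (metis div_mult_mod_eq)
qed

lemma tangent_grid_point_Suc:
  assumes "\<not> m dvd Suc k"
  shows "tangent (1/2) (grid_point m k) (grid_point m (Suc k))"
proof -
  have "Suc k mod m = Suc (k mod m)" "Suc k div m = k div m"
    using assms by (simp_all add: mod_Suc div_Suc dvd_eq_mod_eq_0 split: if_splits)
  then show ?thesis
    by (simp add: tangent_def dist_real2 inj_grid_point inj_eq)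
qed

lemma tangent_grid_point_add:
  assumes "0 < m"
  shows "tangent (1/2) (grid_point m k) (grid_point m (k + m))"
proof -
  have "(k + m) div m = Suc (k div m)" using assms by simp
  then show ?thesis
    using assms by (simp add: tangent_def dist_real2 inj_grid_point inj_eq)
qed

lemma card_multiples_le:
  assumes "0 < m"
  shows "card {k. Suc k < n \<and> m dvd Suc k} \<le> (n - 1) div m"
proof -
  have "{k. Suc k < n \<and> m dvd Suc k} \<subseteq> (\<lambda>j. j * m - 1) ` {1..(n - 1) div m}"
  proof
    fix k assume k: "k \<in> {k. Suc k < n \<and> m dvd Suc k}"
    then obtain j where j: "Suc k = j * m" by (metis dvdE mem_Collect_eq mult.commute)
    then have "1 \<le> j" by (cases j) auto
    moreover have "j \<le> (n - 1) div m"
      using k j assms by (simp add: less_eq_div_iff_mult_less_eq)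
    ultimately show "k \<in> (\<lambda>j. j * m - 1) ` {1..(n - 1) div m}"
      using j by (intro image_eqI[of _ _ j]) auto
  qed
  then have "card {k. Suc k < n \<and> m dvd Suc k} \<le> card ((\<lambda>j. j * m - 1) ` {1..(n - 1) div m})"
    by (rule card_mono[rotated]) simp
  also have "\<dots> \<le> (n - 1) div m"
    using card_image_le[of "{1..(n - 1) div m}" "\<lambda>j. j * m - 1"] by simp
  finally show ?thesis .
qed

lemma grid_doubleton_eq_iff:
  "{grid_point m k, grid_point m l} = {grid_point m k', grid_point m l'} \<longleftrightarrow>
     (k = k' \<and> l = l') \<or> (k = l' \<and> l = k')"
  by (simp add: doubleton_eq_iff inj_grid_point inj_eq)

lemma contact_number_grid_ge:
  assumes "0 < m"
  shows "(n - 1 - (n - 1) div m) + (n - m) \<le> contact_number (grid_point m ` {..<n}) (1/2)"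
proof -
  let ?C = "grid_point m ` {..<n}"
  let ?T = "{{c, d} | c d. c \<in> ?C \<and> d \<in> ?C \<and> tangent (1/2) c d}"
  define H where "H = {k. Suc k < n \<and> \<not> m dvd Suc k}"
  define V where "V = {k. k + m < n}"
  define hor where "hor k = {grid_point m k, grid_point m (Suc k)}" for k
  define ver where "ver k = {grid_point m k, grid_point m (k + m)}" for k
  have "hor ` H \<union> ver ` V \<subseteq> ?T"
    using tangent_grid_point_Suc tangent_grid_point_add[OF assms]
    unfolding hor_def ver_def H_def V_def by fastforce
  moreover have "finite ?T"
  proof -
    have "?T \<subseteq> (\<lambda>(c, d). {c, d}) ` (?C \<times> ?C)" by auto
    then show ?thesis by (rule finite_subset) simp
  qed
  moreover have "card (hor ` H \<union> ver ` V) = card H + card V"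
  proof -
    have "inj_on hor H" "inj_on ver V"
      by (auto intro!: inj_onI simp: hor_def ver_def grid_doubleton_eq_iff)
    moreover have "hor ` H \<inter> ver ` V = {}"
      using assms by (auto simp: H_def hor_def ver_def grid_doubleton_eq_iff)
    moreover have "finite H" "finite V"
      by (rule finite_subset[of _ "{..<n}"], auto simp: H_def V_def)+
    ultimately show ?thesis
      by (simp add: card_Un_disjoint card_image)
  qed
  moreover have "n - 1 - (n - 1) div m \<le> card H"
  proof -
    define M where "M = {k. Suc k < n \<and> m dvd Suc k}"
    have "finite (H \<union> M)"
      by (rule finite_subset[of _ "{..<n}"]) (auto simp: H_def M_def)
    moreover have "{..<n - 1} \<subseteq> H \<union> M"
      unfolding H_def M_def by auto
    ultimately have "card {..<n - 1} \<le> card (H \<union> M)"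
      by (rule card_mono)
    then have "n - 1 \<le> card (H \<union> M)"
      by simp
    also have "\<dots> \<le> card H + card M"
      by (rule card_Un_le)
    finally show ?thesis
      using card_multiples_le[OF assms, of n] unfolding M_def by linarith
  qed
  moreover have "card V = n - m"
    by (simp add: V_def less_diff_conv[symmetric])
  ultimately show ?thesis
    unfolding contact_number_def using card_mono[of ?T "hor ` H \<union> ver ` V"] by linarith
qed

lemma add_sq_lt_four_mul:
  fixes m q n :: nat
  assumes "n \<le> m\<^sup>2" "(m - 1)\<^sup>2 < n" "q * m < n"
  shows "(m + q)\<^sup>2 < 4 * n"
proof -
  have "q * m < m * m"
    using assms(3,1) unfolding power2_eq_square by (rule less_le_trans)
  then have "q < m"
    by simp
  then consider "m = Suc q" | "q + 2 \<le> m" by linarith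
  then show ?thesis
  proof cases
    case 1
    then have "(m + q)\<^sup>2 = 4 * (q * m) + 1"
      by (simp add: power2_eq_square algebra_simps)
    then show ?thesis using assms(3) by linarith
  next
    case 2
    then have "(m + q)\<^sup>2 \<le> (2 * (m - 1))\<^sup>2"
      by (intro power_mono) auto
    also have "\<dots> = 4 * (m - 1)\<^sup>2"
      by (simp add: power_mult_distrib)
    finally show ?thesis using assms(2) by linarith
  qed
qed

lemma ceiling_sqrt_add_div_lt:
  assumes "0 < n"
  shows "real (nat \<lceil>sqrt (real n)\<rceil>) + real ((n - 1) div nat \<lceil>sqrt (real n)\<rceil>) < 2 * sqrt (real n)"
proof -
  let ?m = "nat \<lceil>sqrt (real n)\<rceil>" and ?q = "(n - 1) div nat \<lceil>sqrt (real n)\<rceil>"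
  have m: "real ?m = of_int \<lceil>sqrt (real n)\<rceil>" by simp
  have "1 \<le> ?m"
    using assms by (simp add: Suc_le_eq)
  have "sqrt (real n) \<le> real ?m"
    unfolding m by (rule le_of_int_ceiling)
  then have "real n \<le> (real ?m)\<^sup>2"
    by (rule sqrt_le_D)
  have "real (?m - 1) < sqrt (real n)"
    using \<open>1 \<le> ?m\<close> ceiling_correct[of "sqrt (real n)"] by (simp add: m)
  then have "(real (?m - 1))\<^sup>2 < (sqrt (real n))\<^sup>2"
    by (intro power_strict_mono) auto
  then have "(real (?m - 1))\<^sup>2 < real n"
    by simp
  with \<open>real n \<le> (real ?m)\<^sup>2\<close> have "n \<le> ?m\<^sup>2" "(?m - 1)\<^sup>2 < n"
    by (simp_all only: of_nat_power[symmetric] of_nat_le_iff of_nat_less_iff)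
  moreover have "?q * ?m < n"
    using div_times_less_eq_dividend[of "n - 1" ?m] assms by linarith
  ultimately have "(?m + ?q)\<^sup>2 < 4 * n"
    by (rule add_sq_lt_four_mul)
  then have "real ((?m + ?q)\<^sup>2) < real (4 * n)"
    by (simp only: of_nat_less_iff)
  then have "(real ?m + real ?q)\<^sup>2 < 4 * real n"
    by simp
  then have "real ?m + real ?q < sqrt (4 * real n)"
    by (rule real_less_rsqrt)
  then show ?thesis
    by (simp add: real_sqrt_mult)
qed

lemma lattice_packing_contact_number_ge:
  assumes "0 < n"
  obtains C where "finite C" "card C = n" "\<forall>c\<in>C. c $ 1 \<in> \<int> \<and> c $ 2 \<in> \<int>"
    "\<lfloor>2 * real n - 2 * sqrt (real n)\<rfloor> \<le> int (contact_number C (1/2))"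
proof
  let ?m = "nat \<lceil>sqrt (real n)\<rceil>" and ?q = "(n - 1) div nat \<lceil>sqrt (real n)\<rceil>"
  let ?C = "grid_point ?m ` {..<n}"
  show "finite ?C" by simp
  have "inj_on (grid_point ?m) {..<n}"
    using inj_grid_point by (rule inj_on_subset) simp
  then show "card ?C = n"
    by (simp add: card_image)
  show "\<forall>c\<in>?C. c $ 1 \<in> \<int> \<and> c $ 2 \<in> \<int>" by auto
  have "1 \<le> sqrt (real n)"
    using assms by simp
  then have "sqrt (real n) * 1 \<le> sqrt (real n) * sqrt (real n)"
    by (intro mult_left_mono) auto
  then have "?m \<le> n"
    by (simp add: ceiling_le nat_le_iff)
  then have "real (n - ?m) = real n - real ?m"
    by (rule of_nat_diff)
  moreover have "real (n - 1 - ?q) = real (n - 1) - real ?q"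
    using div_le_dividend by (rule of_nat_diff)
  moreover have "real (n - 1) = real n - 1"
    using assms by simp
  moreover have "(n - 1 - ?q) + (n - ?m) \<le> contact_number ?C (1/2)"
    using assms by (intro contact_number_grid_ge) simp
  then have "real (n - 1 - ?q) + real (n - ?m) \<le> real (contact_number ?C (1/2))"
    by (simp only: of_nat_add[symmetric] of_nat_le_iff)
  moreover have "real ?m + real ?q < 2 * sqrt (real n)"
    using assms by (rule ceiling_sqrt_add_div_lt)
  ultimately have "2 * real n - 2 * sqrt (real n) < real (contact_number ?C (1/2)) + 1"
    by linarith
  then show "\<lfloor>2 * real n - 2 * sqrt (real n)\<rfloor> \<le> int (contact_number ?C (1/2))"
    by (simp add: floor_le_iff)
qed

lemma int_Max_eqI:
  fixes S :: "nat set"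
  assumes bound: "\<And>y. y \<in> S \<Longrightarrow> int y \<le> k" and "x \<in> S" and "k \<le> int x"
  shows "int (Max S) = k"
proof -
  have "S \<subseteq> {..nat k}"
    using bound by fastforce
  then have "finite S"
    by (rule finite_subset) simp
  then have "Max S \<in> S" "x \<le> Max S"
    using \<open>x \<in> S\<close> by (auto intro: Max_in)
  then show ?thesis
    using bound[of "Max S"] \<open>k \<le> int x\<close> by linarith
qed

lemma locally_separable_contact_number_le:
  assumes "locally_separable C r" and "finite C" and "card C = n"
  shows "int (contact_number C r) \<le> \<lfloor>2 * real n - 2 * sqrt (real n)\<rfloor>"
  using contact_number_le_if_nonacute[OF assms(2) locally_separable_imp_nonacute_contacts[OF assms(1)]]
    assms(3)
  by (simp add: le_floor_iff)

lemma lattice_contact_number_le: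
  assumes "finite C" "card C = n" "\<forall>c\<in>C. c $ 1 \<in> \<int> \<and> c $ 2 \<in> \<int>"
  shows "int (contact_number C (1/2)) \<le> \<lfloor>2 * real n - 2 * sqrt (real n)\<rfloor>"
  using assms by (intro locally_separable_contact_number_le totally_separable_imp_locally_separable
      lattice_totally_separable)

lemma int_c_LS_eq:
  assumes "0 < n"
  shows "int (c_LS n) = \<lfloor>2 * real n - 2 * sqrt (real n)\<rfloor>"
proof -
  obtain C where C: "finite C" "card C = n" "\<forall>c\<in>C. c $ 1 \<in> \<int> \<and> c $ 2 \<in> \<int>"
    and "\<lfloor>2 * real n - 2 * sqrt (real n)\<rfloor> \<le> int (contact_number C (1/2))"
    using assms by (rule lattice_packing_contact_number_ge)
  moreover have "locally_separable C (1/2)"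
    using C(3) by (intro totally_separable_imp_locally_separable lattice_totally_separable)
  ultimately show ?thesis
    unfolding c_LS_def
    by (intro int_Max_eqI[where x = "contact_number C (1/2)"])
      (blast intro: locally_separable_contact_number_le)+
qed

lemma int_c_TS_eq:
  assumes "0 < n"
  shows "int (c_TS n) = \<lfloor>2 * real n - 2 * sqrt (real n)\<rfloor>"
proof -
  obtain C where C: "finite C" "card C = n" "\<forall>c\<in>C. c $ 1 \<in> \<int> \<and> c $ 2 \<in> \<int>"
    and "\<lfloor>2 * real n - 2 * sqrt (real n)\<rfloor> \<le> int (contact_number C (1/2))"
    using assms by (rule lattice_packing_contact_number_ge)
  moreover have "totally_separable C (1/2)"
    using C(3) by (rule lattice_totally_separable)
  ultimately show ?thesis
    unfolding c_TS_def
    by (intro int_Max_eqI[where x = "contact_number C (1/2)"])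
      (blast intro: locally_separable_contact_number_le totally_separable_imp_locally_separable)+
qed

lemma int_c_Z2_eq:
  assumes "0 < n"
  shows "int (c_Z2 n) = \<lfloor>2 * real n - 2 * sqrt (real n)\<rfloor>"
proof -
  obtain C where C: "finite C" "card C = n" "\<forall>c\<in>C. c $ 1 \<in> \<int> \<and> c $ 2 \<in> \<int>"
    and "\<lfloor>2 * real n - 2 * sqrt (real n)\<rfloor> \<le> int (contact_number C (1/2))"
    using assms by (rule lattice_packing_contact_number_ge)
  moreover have "disk_packing C (1/2)"
    using lattice_totally_separable[OF C(3)] by (simp add: totally_separable_def)
  ultimately show ?thesis
    unfolding c_Z2_def
    by (intro int_Max_eqI[where x = "contact_number C (1/2)"]) (blast intro: lattice_contact_number_le)+
qed

theorem corollary1: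
  fixes n :: nat
  assumes "n > 1"
  shows "c_Z2 n = c_TS n \<and> c_TS n = c_LS n \<and>
         int (c_LS n) = \<lfloor>2 * real n - 2 * sqrt (real n)\<rfloor>"
proof -
  from assms have "0 < n" by simp
  then have "int (c_Z2 n) = int (c_TS n)" "int (c_TS n) = int (c_LS n)"
    and "int (c_LS n) = \<lfloor>2 * real n - 2 * sqrt (real n)\<rfloor>"
    using int_c_Z2_eq int_c_TS_eq int_c_LS_eq by simp_all
  then show ?thesis by simp
qed

end
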